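(* Assume the probability measure $\mu$ on $\mathbb R^d$ satisfies a weak Poincaré inequality with rate $\beta_\mu$. Then for every $p>2$, every $s>0$ and every smooth bounded $f$, $\mathrm{Var}_\mu(f)\le\beta_\mu\!\left(\frac{s^{p/(p-2)}}{2^{(3p-2)/(p-2)}}\right)\int|\nabla f|^2d\mu+s\,\|f-\mu(f)\|^2_{L^p(\mu)}$.
   Context: A probability measure $\mu$ on $\mathbb R^d$ satisfies a weak Poincaré inequality with rate $\beta_\mu$ if $\beta_\mu:(0,\infty)\to(0,\infty]$ is non-increasing and for all $s>0$ and all smooth bounded $f$, $\mathrm{Var}_\mu(f)\le \beta_\mu(s)\int|\nabla f|^2d\mu+s\,\mathrm{Osc}^2(f)$, where $\mathrm{Osc}(f)=\sup f-\inf f$. *)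

theory Defs
  imports "HOL-Probability.Probability"
begin

text \<open>Iterated partial derivative of a real function on a Euclidean space, along the
  directions in the list vs (innermost first), using the Frechet derivative.\<close>
definition iter_partial :: "'a::euclidean_space list \<Rightarrow> ('a \<Rightarrow> real) \<Rightarrow> 'a \<Rightarrow> real" where
  "iter_partial vs f = fold (\<lambda>v g. \<lambda>x. frechet_derivative g (at x) v) vs f"

definition smooth_fun :: "('a::euclidean_space \<Rightarrow> real) \<Rightarrow> bool" where
  "smooth_fun f \<longleftrightarrow> (\<forall>vs. set vs \<subseteq> Basis \<longrightarrow> (\<forall>x. iter_partial vs f differentiable (at x)))"

definition grad_sq :: "('a::euclidean_space \<Rightarrow> real) \<Rightarrow> 'a \<Rightarrow> real" where
  "grad_sq f x = (\<Sum>b\<in>Basis. (frechet_derivative f (at x) b)\<^sup>2)"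

definition osc :: "('a \<Rightarrow> real) \<Rightarrow> real" where
  "osc f = (SUP x. f x) - (INF x. f x)"

definition var :: "'a measure \<Rightarrow> ('a \<Rightarrow> real) \<Rightarrow> real" where
  "var \<mu> f = (\<integral>x. (f x - (\<integral>y. f y \<partial>\<mu>))\<^sup>2 \<partial>\<mu>)"

definition Lp_norm :: "'a measure \<Rightarrow> real \<Rightarrow> ('a \<Rightarrow> real) \<Rightarrow> real" where
  "Lp_norm \<mu> p f = (\<integral>x. \<bar>f x\<bar> powr p \<partial>\<mu>) powr (1 / p)"

text \<open>Weak Poincare inequality with rate beta (values in (0,infinity], as ennreal).\<close>
definition weak_poincare :: "'a::euclidean_space measure \<Rightarrow> (real \<Rightarrow> ennreal) \<Rightarrow> bool" where
  "weak_poincare \<mu> \<beta> \<longleftrightarrow>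
     (\<forall>s t. 0 < s \<longrightarrow> s \<le> t \<longrightarrow> \<beta> t \<le> \<beta> s) \<and> (\<forall>s>0. 0 < \<beta> s) \<and>
     (\<forall>s>0. \<forall>f. smooth_fun f \<and> bounded (range f) \<longrightarrow>
        ennreal (var \<mu> f) \<le> \<beta> s * (\<integral>\<^sup>+x. ennreal (grad_sq f x) \<partial>\<mu>) + ennreal (s * (osc f)\<^sup>2))"

end

theory Submission
  imports Defs
begin

(* Let g = f - E f and clip it at level R: for a polynomial psi that is close to the
   truncation t |-> max (-R) (min R t) and has |psi'| <= 1 on the range of g, the function
   h = psi o g is smooth, has gradient dominated by that of f and oscillation about 2R, so the
   weak Poincare inequality bounds Var h by beta(r) int |grad f|^2 + 4 r R^2. The pointwise
   identity g^2 = (h - E h)^2 + 2 g (g - h) + 2 g E h - (g - h + E h)^2 gives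
   Var f <= Var h + 2 E[g (g - h)], and g (g - h) is about 0 where |g| <= R and about
   g^2 <= |g|^p R^(2-p) elsewhere. Letting the approximation error tend to 0,
   Var f <= beta(r) int |grad f|^2 + 4 r R^2 + 2 R^(2-p) ||g||_p^p,
   and R = (4/s)^(1/(p-2)) ||g||_p makes the last two terms equal to s ||g||_p^2 for the given r.
   Polynomials are used instead of a smooth truncation because all their derivatives are again
   polynomials, so composing with them preserves smoothness. *)

section \<open>Smoothness of compositions\<close>

definition real_deriv_tower :: "(nat \<Rightarrow> real \<Rightarrow> real) \<Rightarrow> bool" where
  "real_deriv_tower D \<longleftrightarrow> (\<forall>k t. (D k has_real_derivative D (Suc k) t) (at t))"

lemma real_polynomial_function_deriv_tower:
  assumes "real_polynomial_function p"
  obtains D where "D 0 = p" "real_deriv_tower D"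
proof -
  define deriv_poly where "deriv_poly q =
    (SOME q'. real_polynomial_function q' \<and> (\<forall>t. (q has_real_derivative q' t) (at t)))"
    for q :: "real \<Rightarrow> real"
  have deriv_poly:
      "real_polynomial_function (deriv_poly q) \<and> (\<forall>t. (q has_real_derivative deriv_poly q t) (at t))"
    if "real_polynomial_function q" for q
    unfolding deriv_poly_def using someI_ex[OF has_real_derivative_polynomial_function[OF that]] .
  have "real_polynomial_function ((deriv_poly ^^ k) p)" for k
    by (induction k) (auto simp: assms deriv_poly)
  then show ?thesis
    by (intro that[of "\<lambda>k. (deriv_poly ^^ k) p"]) (auto simp: real_deriv_tower_def deriv_poly)
qed

definition partial_deriv :: "'a::euclidean_space \<Rightarrow> ('a \<Rightarrow> real) \<Rightarrow> 'a \<Rightarrow> real" where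
  "partial_deriv b h = (\<lambda>x. frechet_derivative h (at x) b)"

lemma iter_partial_Nil [simp]: "iter_partial [] h = h"
  by (simp add: iter_partial_def)

lemma iter_partial_Cons: "iter_partial (b # bs) h = iter_partial bs (partial_deriv b h)"
  by (simp add: iter_partial_def partial_deriv_def)

lemma iter_partial_snoc: "iter_partial (bs @ [b]) h = partial_deriv b (iter_partial bs h)"
  by (simp add: iter_partial_def partial_deriv_def)

lemma smooth_fun_differentiable: "smooth_fun f \<Longrightarrow> f differentiable (at x)"
  unfolding smooth_fun_def by (metis empty_subsetI iter_partial_Nil list.set(1))

lemma frechet_derivative_real_compose:
  assumes "f differentiable (at x)" and "(\<phi> has_real_derivative d) (at (f x))"
  shows "frechet_derivative (\<lambda>x. \<phi> (f x)) (at x) = (\<lambda>v. d * frechet_derivative f (at x) v)"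
proof -
  have "((\<lambda>x. \<phi> (f x)) has_derivative (\<lambda>v. d * frechet_derivative f (at x) v)) (at x)"
    using has_derivative_compose[OF assms(1)[unfolded frechet_derivative_works]
        assms(2)[unfolded has_field_derivative_def]]
    by (simp add: o_def)
  then show ?thesis by (rule frechet_derivative_at[symmetric])
qed

lemma frechet_derivative_add_at:
  assumes "g differentiable (at x)" and "h differentiable (at x)"
  shows "frechet_derivative (\<lambda>x. g x + h x) (at x)
    = (\<lambda>v. frechet_derivative g (at x) v + frechet_derivative h (at x) v)"
  using has_derivative_add[OF assms[unfolded frechet_derivative_works]]
  by (rule frechet_derivative_at[symmetric])

lemma frechet_derivative_mult_at:
  fixes g h :: "'a::real_normed_vector \<Rightarrow> real"
  assumes "g differentiable (at x)" and "h differentiable (at x)"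
  shows "frechet_derivative (\<lambda>x. g x * h x) (at x)
    = (\<lambda>v. g x * frechet_derivative h (at x) v + frechet_derivative g (at x) v * h x)"
  using has_derivative_mult[OF assms[unfolded frechet_derivative_works]]
  by (rule frechet_derivative_at[symmetric])

text \<open>Partial differentiation maps this algebra into itself (chain and product rule),
  which is what makes D 0 \<circ> f smooth.\<close>
inductive_set compose_algebra
  :: "('a::euclidean_space \<Rightarrow> real) \<Rightarrow> (nat \<Rightarrow> real \<Rightarrow> real) \<Rightarrow> ('a \<Rightarrow> real) set"
  for f D where
  iter_partial: "set bs \<subseteq> Basis \<Longrightarrow> iter_partial bs f \<in> compose_algebra f D"
| compose: "(\<lambda>x. D k (f x)) \<in> compose_algebra f D"
| add: "g \<in> compose_algebra f D \<Longrightarrow> h \<in> compose_algebra f D \<Longrightarrow> (\<lambda>x. g x + h x) \<in> compose_algebra f D"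
| mult: "g \<in> compose_algebra f D \<Longrightarrow> h \<in> compose_algebra f D \<Longrightarrow> (\<lambda>x. g x * h x) \<in> compose_algebra f D"

lemma compose_algebra_differentiable_partial:
  assumes f: "smooth_fun f" and D: "real_deriv_tower D" and g: "g \<in> compose_algebra f D"
  shows "(\<forall>x. g differentiable (at x)) \<and> (\<forall>b\<in>Basis. partial_deriv b g \<in> compose_algebra f D)"
  using g
proof induction
  case (iter_partial bs)
  then show ?case
    using f compose_algebra.iter_partial[of "bs @ [_]" f D]
    by (auto simp: smooth_fun_def iter_partial_snoc)
next
  case (compose k)
  have deriv: "(D k has_real_derivative D (Suc k) (f x)) (at (f x))" for x
    using D by (simp add: real_deriv_tower_def)
  have "partial_deriv b (\<lambda>x. D k (f x)) = (\<lambda>x. D (Suc k) (f x) * iter_partial [b] f x)" for b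
    by (simp add: partial_deriv_def iter_partial_Cons
        frechet_derivative_real_compose[OF smooth_fun_differentiable[OF f] deriv])
  moreover have "(\<lambda>x. D k (f x)) differentiable (at x)" for x
    using differentiable_chain_at[OF smooth_fun_differentiable[OF f], of "D k"] deriv
    by (auto simp: o_def intro: differentiableI simp: has_field_derivative_def)
  ultimately show ?case
    by (auto intro!: compose_algebra.mult compose_algebra.iter_partial compose_algebra.compose)
next
  case (add g h)
  then have "partial_deriv b (\<lambda>x. g x + h x) = (\<lambda>x. partial_deriv b g x + partial_deriv b h x)" for b
    by (simp add: partial_deriv_def frechet_derivative_add_at)
  with add show ?case by (auto intro!: compose_algebra.add)
next
  case (mult g h)
  then have "partial_deriv b (\<lambda>x. g x * h x) = (\<lambda>x. g x * partial_deriv b h x + partial_deriv b g x * h x)" for b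
    by (simp add: partial_deriv_def frechet_derivative_mult_at)
  with mult show ?case by (auto intro!: compose_algebra.add compose_algebra.mult)
qed

lemma smooth_fun_real_compose:
  assumes f: "smooth_fun f" and D: "real_deriv_tower D"
  shows "smooth_fun (\<lambda>x. D 0 (f x))"
proof -
  have "iter_partial bs g \<in> compose_algebra f D"
    if "g \<in> compose_algebra f D" "set bs \<subseteq> Basis" for bs g
    using that
  proof (induction bs arbitrary: g)
    case (Cons b bs)
    then show ?case
      using compose_algebra_differentiable_partial[OF f D] by (simp add: iter_partial_Cons)
  qed simp
  then show ?thesis
    using compose_algebra_differentiable_partial[OF f D] compose_algebra.compose[of D 0 f]
    unfolding smooth_fun_def by blast
qed

lemma smooth_fun_polynomial_compose:
  assumes "smooth_fun f" and "real_polynomial_function \<psi>"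
  shows "smooth_fun (\<lambda>x. \<psi> (f x))"
proof -
  obtain D where "D 0 = \<psi>" "real_deriv_tower D"
    using real_polynomial_function_deriv_tower[OF assms(2)] by blast
  then show ?thesis
    using smooth_fun_real_compose[OF assms(1)] by blast
qed

lemma grad_sq_nonneg: "0 \<le> grad_sq f x"
  by (simp add: grad_sq_def sum_nonneg)

lemma grad_sq_real_compose_le:
  assumes "f differentiable (at x)" and "(\<phi> has_real_derivative d) (at (f x))" and "\<bar>d\<bar> \<le> 1"
  shows "grad_sq (\<lambda>x. \<phi> (f x)) x \<le> grad_sq f x"
proof -
  have "grad_sq (\<lambda>x. \<phi> (f x)) x = d\<^sup>2 * grad_sq f x"
    by (simp add: grad_sq_def frechet_derivative_real_compose[OF assms(1,2)] sum_distrib_left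
        power_mult_distrib)
  also have "\<dots> \<le> grad_sq f x"
    using assms(3) grad_sq_nonneg[of f x] by (simp add: abs_square_le_1 mult_left_le_one_le)
  finally show ?thesis .
qed

lemma smooth_fun_borel_measurable:
  assumes "smooth_fun f" and "sets \<mu> = sets borel"
  shows "f \<in> borel_measurable \<mu>"
proof -
  have "continuous_on UNIV f"
    using smooth_fun_differentiable[OF assms(1)]
    by (intro continuous_at_imp_continuous_on ballI differentiable_imp_continuous_within) auto
  then show ?thesis
    using measurable_cong_sets[OF assms(2) refl] borel_measurable_continuous_onI by blast
qed


section \<open>Polynomial clipping\<close>

lemma real_polynomial_function_shift:
  "real_polynomial_function \<psi> \<Longrightarrow> real_polynomial_function (\<lambda>t. \<psi> (t - c))"
  using real_polynomial_function_compose[of "\<lambda>t. t - c" \<psi>]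
  by (simp add: o_def polynomial_function_diff polynomial_function_id polynomial_function_const)

lemma real_polynomial_function_antiderivative:
  assumes "real_polynomial_function q"
  obtains Q where "real_polynomial_function Q" "Q 0 = 0" "\<And>x. (Q has_real_derivative q x) (at x)"
proof -
  obtain a n where q: "q = (\<lambda>x. \<Sum>i\<le>n. a i * x ^ i)"
    using assms real_polynomial_function_iff_sum by blast
  define Q where "Q = (\<lambda>x::real. \<Sum>i\<le>n. a i / real (Suc i) * x ^ Suc i)"
  have "real_polynomial_function Q"
    unfolding Q_def by (intro real_polynomial_function_sum real_polynomial_function.intros
        real_polynomial_function_power) (auto intro: bounded_linear_ident)
  moreover have "(Q has_real_derivative q x) (at x)" for x
  proof -
    have "(Q has_real_derivative (\<Sum>i\<le>n. a i / real (Suc i) * (real (Suc i) * x ^ (Suc i - Suc 0)))) (at x)"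
      unfolding Q_def by (intro DERIV_sum DERIV_cmult DERIV_pow)
    then show ?thesis by (simp add: q)
  qed
  ultimately show ?thesis using that by (simp add: Q_def)
qed

lemma real_polynomial_plateau:
  fixes R \<delta> \<eta> M :: real
  assumes "0 < \<delta>" and "0 < \<eta>"
  obtains q where "real_polynomial_function q"
    "\<And>z. \<bar>z\<bar> \<le> M \<Longrightarrow> \<bar>q z\<bar> \<le> 1" "\<And>z. \<bar>z\<bar> \<le> M \<Longrightarrow> -\<eta> \<le> q z"
    "\<And>z. \<bar>z\<bar> \<le> M \<Longrightarrow> \<bar>z\<bar> \<le> R \<Longrightarrow> 1 - 2 * \<eta> \<le> q z"
    "\<And>z. \<bar>z\<bar> \<le> M \<Longrightarrow> R + \<delta> \<le> \<bar>z\<bar> \<Longrightarrow> \<bar>q z\<bar> \<le> \<eta>"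
proof -
  define \<theta> where "\<theta> t = max 0 (min 1 ((R + \<delta> - \<bar>t\<bar>) / \<delta>))" for t
  have "continuous_on {-M..M} \<theta>"
    unfolding \<theta>_def using assms(1) by (intro continuous_intros) auto
  then obtain q0 where q0: "real_polynomial_function q0" "\<And>z. z \<in> {-M..M} \<Longrightarrow> \<bar>\<theta> z - q0 z\<bar> < \<eta>"
    using Stone_Weierstrass_real_polynomial_function[OF compact_Icc _ assms(2)] by blast
  have approx: "\<bar>\<theta> z - q0 z\<bar> < \<eta>" if "\<bar>z\<bar> \<le> M" for z
    using q0(2)[of z] that by (auto simp: abs_le_iff)
  have \<theta>_range: "0 \<le> \<theta> z" "\<theta> z \<le> 1" for z
    by (auto simp: \<theta>_def)
  have \<theta>_inner: "\<theta> z = 1" if "\<bar>z\<bar> \<le> R" for z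
    using that assms(1) by (simp add: \<theta>_def)
  have \<theta>_outer: "\<theta> z = 0" if "R + \<delta> \<le> \<bar>z\<bar>" for z
    using that assms(1) by (simp add: \<theta>_def divide_nonpos_pos)
  text \<open>Dividing by 1 + \<eta> turns the two-sided error into the upper bound 1.\<close>
  define q where "q z = q0 z / (1 + \<eta>)" for z
  show ?thesis
  proof (rule that)
    show "real_polynomial_function q"
      unfolding q_def using q0(1) by (rule real_polynomial_function_divide)
  next
    fix z assume z: "\<bar>z\<bar> \<le> M"
    have "-\<eta> < q0 z" "\<bar>q0 z\<bar> < 1 + \<eta>"
      using approx[OF z] \<theta>_range[of z] by auto
    then show "\<bar>q z\<bar> \<le> 1" "-\<eta> \<le> q z"
      using assms(2) mult_pos_pos[OF assms(2) assms(2)]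
      by (auto simp: q_def field_simps abs_less_iff simp del: mult_pos_pos)
  next
    fix z assume "\<bar>z\<bar> \<le> M" "\<bar>z\<bar> \<le> R"
    then have "1 - \<eta> < q0 z"
      using approx \<theta>_inner by fastforce
    then show "1 - 2 * \<eta> \<le> q z"
      using assms(2) mult_pos_pos[OF assms(2) assms(2)]
      by (simp add: q_def field_simps del: mult_pos_pos)
  next
    fix z assume "\<bar>z\<bar> \<le> M" "R + \<delta> \<le> \<bar>z\<bar>"
    then have "\<bar>q0 z\<bar> < \<eta>"
      using approx \<theta>_outer by fastforce
    then show "\<bar>q z\<bar> \<le> \<eta>"
      using assms(2) mult_pos_pos[OF assms(2) assms(2)]
      by (auto simp: q_def field_simps abs_less_iff abs_le_iff simp del: mult_pos_pos)
  qed
qed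

lemma real_MVT_closed_segment:
  assumes "\<And>x. (f has_real_derivative f' x) (at x)"
  obtains z where "z \<in> closed_segment a b" "f b - f a = (b - a) * f' z"
proof (cases a b rule: linorder_cases)
  case less
  then obtain z where "a < z" "z < b" "f b - f a = (b - a) * f' z"
    using MVT2[OF less, of f f'] assms by blast
  then show ?thesis
    using that[of z] by (simp add: closed_segment_eq_real_ivl)
next
  case greater
  then obtain z where "b < z" "z < a" "f a - f b = (a - b) * f' z"
    using MVT2[OF greater, of f f'] assms by blast
  then show ?thesis
    using that[of z] by (simp add: closed_segment_eq_real_ivl algebra_simps)
qed (use that in auto)

lemma antiderivative_plateau_gap:
  fixes \<psi> q :: "real \<Rightarrow> real"
  assumes \<psi>: "\<psi> 0 = 0" "\<And>t. (\<psi> has_real_derivative q t) (at t)"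
    and q: "\<And>z. \<bar>z\<bar> \<le> M \<Longrightarrow> -\<eta> \<le> q z" "\<And>z. \<bar>z\<bar> \<le> M \<Longrightarrow> \<bar>z\<bar> \<le> R \<Longrightarrow> 1 - 2 * \<eta> \<le> q z"
    and \<eta>: "0 \<le> \<eta>" and t: "\<bar>t\<bar> \<le> M"
  shows "t * (t - \<psi> t) \<le> (if R < \<bar>t\<bar> then t\<^sup>2 else 0) + 2 * \<eta> * t\<^sup>2"
proof -
  obtain z where z: "z \<in> closed_segment 0 t" "\<psi> t - \<psi> 0 = (t - 0) * q z"
    using real_MVT_closed_segment[OF \<psi>(2)] by blast
  have z_le: "\<bar>z\<bar> \<le> \<bar>t\<bar>"
    using z(1) by (auto simp: closed_segment_eq_real_ivl split: if_splits)
  have "t * (t - \<psi> t) = t\<^sup>2 * (1 - q z)"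
    using z(2) \<psi>(1) by (simp add: power2_eq_square algebra_simps)
  also have "\<dots> \<le> (if R < \<bar>t\<bar> then t\<^sup>2 else 0) + 2 * \<eta> * t\<^sup>2"
  proof (cases "R < \<bar>t\<bar>")
    case True
    have "t\<^sup>2 * (1 - q z) \<le> t\<^sup>2 * (1 + \<eta>)"
      using q(1)[of z] z_le t by (intro mult_left_mono) auto
    moreover have "t\<^sup>2 * (1 + \<eta>) \<le> t\<^sup>2 + 2 * \<eta> * t\<^sup>2"
      using \<eta> by (simp add: algebra_simps)
    ultimately show ?thesis
      using True by simp
  next
    case False
    have "t\<^sup>2 * (1 - q z) \<le> t\<^sup>2 * (2 * \<eta>)"
      using q(2)[of z] z_le t False by (intro mult_left_mono) auto
    then show ?thesis
      using False by (simp add: algebra_simps)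
  qed
  finally show ?thesis .
qed

lemma antiderivative_plateau_abs_le:
  fixes \<psi> q :: "real \<Rightarrow> real"
  assumes \<psi>: "\<psi> 0 = 0" "\<And>t. (\<psi> has_real_derivative q t) (at t)"
    and q: "\<And>z. \<bar>z\<bar> \<le> M \<Longrightarrow> \<bar>q z\<bar> \<le> 1" "\<And>z. \<bar>z\<bar> \<le> M \<Longrightarrow> S \<le> \<bar>z\<bar> \<Longrightarrow> \<bar>q z\<bar> \<le> \<eta>"
    and S: "0 \<le> S" and \<eta>: "0 \<le> \<eta>" and t: "\<bar>t\<bar> \<le> M"
  shows "\<bar>\<psi> t\<bar> \<le> S + \<eta> * \<bar>t\<bar>"
proof -
  have \<psi>_le_abs: "\<bar>\<psi> u\<bar> \<le> \<bar>u\<bar>" if "\<bar>u\<bar> \<le> M" for u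
  proof -
    obtain z where "z \<in> closed_segment 0 u" "\<psi> u - \<psi> 0 = (u - 0) * q z"
      using real_MVT_closed_segment[OF \<psi>(2)] by blast
    moreover from this(1) have "\<bar>z\<bar> \<le> M"
      using that by (auto simp: closed_segment_eq_real_ivl split: if_splits)
    ultimately show ?thesis
      using q(1) \<psi>(1) by (simp add: abs_mult mult_left_le)
  qed
  show ?thesis
  proof (cases "\<bar>t\<bar> \<le> S")
    case True
    then show ?thesis
      using \<psi>_le_abs[OF t] \<eta> by (simp add: add_increasing2)
  next
    case False
    text \<open>Beyond S the derivative is at most \<eta>, so \<psi> hardly grows past \<psi> s.\<close>
    define s where "s = sgn t * S"
    have s: "\<bar>s\<bar> = S" "\<bar>t - s\<bar> \<le> \<bar>t\<bar>"
      using False S by (auto simp: s_def abs_mult sgn_if)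
    obtain z where z: "z \<in> closed_segment s t" "\<psi> t - \<psi> s = (t - s) * q z"
      using real_MVT_closed_segment[OF \<psi>(2)] by blast
    have "S \<le> \<bar>z\<bar>" "\<bar>z\<bar> \<le> M"
      using z(1) False S t by (auto simp: s_def sgn_if closed_segment_eq_real_ivl split: if_splits)
    then have "\<bar>q z\<bar> \<le> \<eta>"
      using q(2) by blast
    have "\<bar>\<psi> t\<bar> \<le> \<bar>\<psi> s\<bar> + \<bar>t - s\<bar> * \<bar>q z\<bar>"
      using z(2) by (simp add: abs_mult[symmetric])
    also have "\<dots> \<le> S + \<bar>t\<bar> * \<eta>"
      using \<psi>_le_abs[of s] s t False \<open>\<bar>q z\<bar> \<le> \<eta>\<close> by (intro add_mono mult_mono) auto
    finally show ?thesis
      by (simp add: mult.commute)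
  qed
qed

lemma real_polynomial_clipping:
  fixes R M e :: real
  assumes R: "0 \<le> R" and e: "0 < e"
  obtains \<psi> \<psi>' where "real_polynomial_function \<psi>" "\<And>t. (\<psi> has_real_derivative \<psi>' t) (at t)"
    "\<And>t. \<bar>t\<bar> \<le> M \<Longrightarrow> \<bar>\<psi>' t\<bar> \<le> 1"
    "\<And>t. \<bar>t\<bar> \<le> M \<Longrightarrow> \<bar>\<psi> t\<bar> \<le> R + e"
    "\<And>t. \<bar>t\<bar> \<le> M \<Longrightarrow> t * (t - \<psi> t) \<le> (if R < \<bar>t\<bar> then t\<^sup>2 else 0) + e"
proof -
  define K where "K = M\<^sup>2 + \<bar>M\<bar> + 1"
  define \<eta> where "\<eta> = e / (2 * K)"
  have K: "0 < K"
    unfolding K_def by (intro add_nonneg_pos add_nonneg_nonneg) auto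
  have \<eta>: "0 < \<eta>" and \<delta>: "0 < e / 2"
    using e K by (auto simp: \<eta>_def)
  have \<eta>_small: "2 * \<eta> * t\<^sup>2 \<le> e" "\<eta> * \<bar>t\<bar> \<le> e / 2" if "\<bar>t\<bar> \<le> M" for t
  proof -
    have "t\<^sup>2 \<le> M\<^sup>2"
      using that abs_le_square_iff[of t M] by simp
    moreover have "0 \<le> M\<^sup>2"
      by simp
    ultimately have "t\<^sup>2 \<le> K" "\<bar>t\<bar> \<le> K"
      using that unfolding K_def by linarith+
    then show "2 * \<eta> * t\<^sup>2 \<le> e" "\<eta> * \<bar>t\<bar> \<le> e / 2"
      using e K by (auto simp: \<eta>_def field_simps)
  qed
  obtain q where q: "real_polynomial_function q"
    "\<And>z. \<bar>z\<bar> \<le> M \<Longrightarrow> \<bar>q z\<bar> \<le> 1" "\<And>z. \<bar>z\<bar> \<le> M \<Longrightarrow> -\<eta> \<le> q z"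
    "\<And>z. \<bar>z\<bar> \<le> M \<Longrightarrow> \<bar>z\<bar> \<le> R \<Longrightarrow> 1 - 2 * \<eta> \<le> q z"
    "\<And>z. \<bar>z\<bar> \<le> M \<Longrightarrow> R + e / 2 \<le> \<bar>z\<bar> \<Longrightarrow> \<bar>q z\<bar> \<le> \<eta>"
    using real_polynomial_plateau[OF \<delta> \<eta>] by blast
  obtain \<psi> where \<psi>: "real_polynomial_function \<psi>" "\<psi> 0 = 0" "\<And>t. (\<psi> has_real_derivative q t) (at t)"
    using real_polynomial_function_antiderivative[OF q(1)] by blast
  show ?thesis
  proof (rule that[OF \<psi>(1,3) q(2)])
    fix t assume t: "\<bar>t\<bar> \<le> M"
    have "\<bar>\<psi> t\<bar> \<le> R + e / 2 + \<eta> * \<bar>t\<bar>"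
      by (rule antiderivative_plateau_abs_le[where S = "R + e / 2", OF \<psi>(2,3) q(2,5)])
        (use R e \<eta> t in auto)
    then show "\<bar>\<psi> t\<bar> \<le> R + e"
      using \<eta>_small(2)[OF t] by simp
    have "t * (t - \<psi> t) \<le> (if R < \<bar>t\<bar> then t\<^sup>2 else 0) + 2 * \<eta> * t\<^sup>2"
      by (rule antiderivative_plateau_gap[where R = R, OF \<psi>(2,3) q(3,4)]) (use \<eta> t in auto)
    then show "t * (t - \<psi> t) \<le> (if R < \<bar>t\<bar> then t\<^sup>2 else 0) + e"
      using \<eta>_small(1)[OF t] by linarith
  qed
qed


section \<open>Variance estimates\<close>

lemma osc_square_le:
  assumes "\<And>x. \<bar>h x\<bar> \<le> K"
  shows "(osc h)\<^sup>2 \<le> (2 * K)\<^sup>2"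
proof -
  have bounds: "h x \<le> K" "-K \<le> h x" for x
    using assms[of x] by auto
  have "(INF x. h x) \<le> h undefined" "h undefined \<le> (SUP x. h x)"
    using bounds by (auto intro!: cINF_lower cSUP_upper bdd_belowI2 bdd_aboveI2)
  moreover have "(SUP x. h x) \<le> K" "-K \<le> (INF x. h x)"
    using bounds by (auto intro: cSUP_least cINF_greatest)
  ultimately show ?thesis
    unfolding osc_def by (intro power_mono) auto
qed

lemma (in prob_space) second_moment_le_variance:
  fixes g h :: "'a \<Rightarrow> real"
  assumes g: "g \<in> borel_measurable M" "\<And>x. \<bar>g x\<bar> \<le> K" and g0: "expectation g = 0"
    and h: "h \<in> borel_measurable M" "\<And>x. \<bar>h x\<bar> \<le> K"
  shows "expectation (\<lambda>x. (g x)\<^sup>2) \<le> variance h + 2 * expectation (\<lambda>x. g x * (g x - h x))"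
proof -
  define a where "a = expectation h"
  have integrable: "integrable M u" if "u \<in> borel_measurable M" "\<And>x. \<bar>u x\<bar> \<le> B"
    for u :: "'a \<Rightarrow> real" and B
    using that by (intro integrable_const_bound[of _ B]) auto
  have integrable_mult: "integrable M (\<lambda>x. u x * v x)"
    if "u \<in> borel_measurable M" "\<And>x. \<bar>u x\<bar> \<le> B" "v \<in> borel_measurable M" "\<And>x. \<bar>v x\<bar> \<le> C"
    for u v :: "'a \<Rightarrow> real" and B C
    using that by (intro integrable[of _ "B * C"]) (auto simp: abs_mult intro!: mult_mono order.trans[OF abs_ge_zero])
  have "\<bar>g x - h x\<bar> \<le> 2 * K" "\<bar>h x - a\<bar> \<le> K + \<bar>a\<bar>" for x
    using g(2)[of x] h(2)[of x] by auto
  then have int_sq: "integrable M (\<lambda>x. (g x)\<^sup>2)" "integrable M (\<lambda>x. (h x - a)\<^sup>2)"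
    and int_prod: "integrable M (\<lambda>x. g x * (g x - h x))"
    unfolding power2_eq_square using g h by (auto intro!: integrable_mult)
  text \<open>Pointwise, the difference of the two sides is the square of g - (h - a).\<close>
  have "(g x)\<^sup>2 \<le> (h x - a)\<^sup>2 + 2 * (g x * (g x - h x)) + 2 * a * g x" for x
    using zero_le_power2[of "g x - (h x - a)"] by (simp only: power2_eq_square algebra_simps)
  then have "expectation (\<lambda>x. (g x)\<^sup>2)
      \<le> expectation (\<lambda>x. (h x - a)\<^sup>2 + 2 * (g x * (g x - h x)) + 2 * a * g x)"
    using int_sq int_prod integrable[OF g] by (intro integral_mono) auto
  also have "\<dots> = variance h + 2 * expectation (\<lambda>x. g x * (g x - h x))"
    using int_sq int_prod integrable[OF g] g0 by (simp add: a_def)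
  finally show ?thesis .
qed

lemma square_le_powr_tail:
  fixes R p t :: real
  assumes "0 < R" and "2 \<le> p" and "R \<le> \<bar>t\<bar>"
  shows "t\<^sup>2 \<le> \<bar>t\<bar> powr p * R powr (2 - p)"
proof -
  have "1 \<le> (\<bar>t\<bar> / R) powr (p - 2)"
    using assms by (intro ge_one_powr_ge_zero) auto
  then have "\<bar>t\<bar> powr 2 \<le> \<bar>t\<bar> powr 2 * (\<bar>t\<bar> / R) powr (p - 2)"
    by (simp add: mult_le_cancel_left1)
  also have "\<dots> = \<bar>t\<bar> powr p * R powr (2 - p)"
    using assms by (simp add: powr_divide powr_diff powr_add[symmetric] divide_simps)
  finally show ?thesis
    using assms by simp
qed

lemma (in prob_space) second_moment_le_clipped_variance:
  fixes g :: "'a \<Rightarrow> real" and \<psi> :: "real \<Rightarrow> real"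
  assumes g: "g \<in> borel_measurable M" "\<And>x. \<bar>g x\<bar> \<le> B" "expectation g = 0"
    and \<psi>: "continuous_on UNIV \<psi>" "\<And>t. \<bar>t\<bar> \<le> B \<Longrightarrow> \<bar>\<psi> t\<bar> \<le> K"
      "\<And>t. \<bar>t\<bar> \<le> B \<Longrightarrow> t * (t - \<psi> t) \<le> (if R < \<bar>t\<bar> then t\<^sup>2 else 0) + e"
    and R: "0 < R" and p: "2 \<le> p"
  shows "expectation (\<lambda>x. (g x)\<^sup>2)
    \<le> variance (\<lambda>x. \<psi> (g x)) + 2 * (expectation (\<lambda>x. \<bar>g x\<bar> powr p) * R powr (2 - p) + e)"
proof -
  define h where "h = (\<lambda>x. \<psi> (g x))"
  have integrable: "integrable M u" if "u \<in> borel_measurable M" "\<And>x. \<bar>u x\<bar> \<le> L"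
    for u :: "'a \<Rightarrow> real" and L
    using that by (intro integrable_const_bound[of _ L]) auto
  have h_meas: "h \<in> borel_measurable M"
    unfolding h_def using borel_measurable_continuous_on[OF \<psi>(1) g(1)] .
  have int_tail: "integrable M (\<lambda>x. \<bar>g x\<bar> powr p)"
    using g p by (intro integrable[of _ "B powr p"]) (auto intro: powr_mono2)
  have h_le: "\<bar>h x\<bar> \<le> K" for x
    using \<psi>(2)[OF g(2)] by (simp add: h_def)
  have "\<bar>g x\<bar> \<le> B + K" "\<bar>h x\<bar> \<le> B + K" for x
    using g(2)[of x] h_le[of x] by (auto simp: abs_le_iff)
  then have "expectation (\<lambda>x. (g x)\<^sup>2) \<le> variance h + 2 * expectation (\<lambda>x. g x * (g x - h x))"
    using second_moment_le_variance[OF g(1) _ g(3) h_meas] by blast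
  also have "expectation (\<lambda>x. g x * (g x - h x)) \<le> expectation (\<lambda>x. \<bar>g x\<bar> powr p * R powr (2 - p) + e)"
  proof (rule integral_mono)
    have "\<bar>g x * (g x - h x)\<bar> \<le> B * (B + K)" for x
      unfolding abs_mult using g(2)[of x] h_le[of x] by (intro mult_mono) auto
    then show "integrable M (\<lambda>x. g x * (g x - h x))"
      using g(1) h_meas by (intro integrable) auto
    show "integrable M (\<lambda>x. \<bar>g x\<bar> powr p * R powr (2 - p) + e)"
      using int_tail by auto
    fix x
    have "(if R < \<bar>g x\<bar> then (g x)\<^sup>2 else 0) \<le> \<bar>g x\<bar> powr p * R powr (2 - p)"
      using square_le_powr_tail[OF R p, of "g x"] by auto
    then show "g x * (g x - h x) \<le> \<bar>g x\<bar> powr p * R powr (2 - p) + e"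
      using \<psi>(3)[OF g(2)[of x]] unfolding h_def by linarith
  qed
  also have "\<dots> = expectation (\<lambda>x. \<bar>g x\<bar> powr p) * R powr (2 - p) + e"
    using int_tail by (simp add: prob_space)
  finally show ?thesis
    by (simp add: h_def)
qed


section \<open>Weak Poincare inequality with an L^p remainder\<close>

text \<open>The weak Poincare inequality at a fixed scale r, for the functions whose gradient is
  pointwise dominated by that of f; C plays the role of beta r times the energy of f.\<close>
definition dominated_poincare :: "'a::euclidean_space measure \<Rightarrow> ('a \<Rightarrow> real) \<Rightarrow> real \<Rightarrow> real \<Rightarrow> bool"
  where "dominated_poincare \<mu> f C r \<longleftrightarrow>
    (\<forall>h. smooth_fun h \<longrightarrow> bounded (range h) \<longrightarrow> (\<forall>x. grad_sq h x \<le> grad_sq f x)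
      \<longrightarrow> var \<mu> h \<le> C + r * (osc h)\<^sup>2)"

lemma dominated_poincareD:
  assumes "dominated_poincare \<mu> f C r" and "smooth_fun h" "bounded (range h)"
    and "\<And>x. grad_sq h x \<le> grad_sq f x"
  shows "var \<mu> h \<le> C + r * (osc h)\<^sup>2"
  using assms unfolding dominated_poincare_def by blast

lemma weak_poincare_dominated:
  assumes wp: "weak_poincare \<mu> \<beta>" and r: "0 < r"
    and C: "\<beta> r * (\<integral>\<^sup>+x. ennreal (grad_sq f x) \<partial>\<mu>) = ennreal C" "0 \<le> C"
  shows "dominated_poincare \<mu> f C r"
  unfolding dominated_poincare_def
proof (intro allI impI)
  fix h assume h: "smooth_fun h" "bounded (range h)" and grad: "\<forall>x. grad_sq h x \<le> grad_sq f x"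
  have "ennreal (var \<mu> h) \<le> \<beta> r * (\<integral>\<^sup>+x. ennreal (grad_sq h x) \<partial>\<mu>) + ennreal (r * (osc h)\<^sup>2)"
    using wp r h unfolding weak_poincare_def by blast
  also have "\<dots> \<le> \<beta> r * (\<integral>\<^sup>+x. ennreal (grad_sq f x) \<partial>\<mu>) + ennreal (r * (osc h)\<^sup>2)"
    using grad r by (intro add_mono mult_left_mono nn_integral_mono ennreal_leI) auto
  also have "\<dots> = ennreal (C + r * (osc h)\<^sup>2)"
    using C r by (simp add: ennreal_plus)
  finally show "var \<mu> h \<le> C + r * (osc h)\<^sup>2"
    using C r by (subst (asm) ennreal_le_iff) auto
qed

lemma dominated_poincare_compose:
  assumes poincare: "dominated_poincare \<mu> f C r" and r: "0 \<le> r" and f: "smooth_fun f"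
    and \<phi>: "real_polynomial_function \<phi>" "\<And>t. (\<phi> has_real_derivative \<phi>' t) (at t)"
    and \<phi>'_le: "\<And>x. \<bar>\<phi>' (f x)\<bar> \<le> 1" and \<phi>_le: "\<And>x. \<bar>\<phi> (f x)\<bar> \<le> K"
  shows "var \<mu> (\<lambda>x. \<phi> (f x)) \<le> C + r * (2 * K)\<^sup>2"
proof -
  have "var \<mu> (\<lambda>x. \<phi> (f x)) \<le> C + r * (osc (\<lambda>x. \<phi> (f x)))\<^sup>2"
  proof (rule dominated_poincareD[OF poincare])
    show "smooth_fun (\<lambda>x. \<phi> (f x))"
      using smooth_fun_polynomial_compose[OF f \<phi>(1)] .
    show "bounded (range (\<lambda>x. \<phi> (f x)))"
      using \<phi>_le unfolding bounded_iff by auto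
    show "grad_sq (\<lambda>x. \<phi> (f x)) x \<le> grad_sq f x" for x
      using grad_sq_real_compose_le[OF smooth_fun_differentiable[OF f] \<phi>(2) \<phi>'_le] .
  qed
  also have "\<dots> \<le> C + r * (2 * K)\<^sup>2"
    using osc_square_le[of "\<lambda>x. \<phi> (f x)", OF \<phi>_le] r by (simp add: mult_left_mono)
  finally show ?thesis .
qed

lemma var_le_clipped:
  fixes \<mu> :: "'a::euclidean_space measure" and f :: "'a \<Rightarrow> real"
  assumes \<mu>: "prob_space \<mu>" "sets \<mu> = sets borel" and f: "smooth_fun f" "bounded (range f)"
    and poincare: "dominated_poincare \<mu> f C r"
    and r: "0 \<le> r" and p: "2 \<le> p" and R: "0 < R" and e: "0 < e"
  shows "var \<mu> f \<le> C + r * (2 * (R + e))\<^sup>2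
    + 2 * ((\<integral>x. \<bar>f x - (\<integral>y. f y \<partial>\<mu>)\<bar> powr p \<partial>\<mu>) * R powr (2 - p) + e)"
proof -
  interpret prob_space \<mu> by fact
  define m where "m = expectation f"
  obtain B where B: "\<And>x. \<bar>f x\<bar> \<le> B"
    using f(2) unfolding bounded_iff by auto
  have f_meas: "f \<in> borel_measurable \<mu>"
    using smooth_fun_borel_measurable[OF f(1) \<mu>(2)] .
  have "integrable \<mu> f"
    using f_meas B by (intro integrable_const_bound[of _ B]) auto
  then have centered: "expectation (\<lambda>x. f x - m) = 0"
    by (simp add: m_def prob_space)
  have centered_le: "\<bar>f x - m\<bar> \<le> B + \<bar>m\<bar>" for x
    using B[of x] by auto
  obtain \<psi> \<psi>' where \<psi>: "real_polynomial_function \<psi>" "\<And>t. (\<psi> has_real_derivative \<psi>' t) (at t)"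
    "\<And>t. \<bar>t\<bar> \<le> B + \<bar>m\<bar> \<Longrightarrow> \<bar>\<psi>' t\<bar> \<le> 1"
    "\<And>t. \<bar>t\<bar> \<le> B + \<bar>m\<bar> \<Longrightarrow> \<bar>\<psi> t\<bar> \<le> R + e"
    "\<And>t. \<bar>t\<bar> \<le> B + \<bar>m\<bar> \<Longrightarrow> t * (t - \<psi> t) \<le> (if R < \<bar>t\<bar> then t\<^sup>2 else 0) + e"
    using real_polynomial_clipping[of R e "B + \<bar>m\<bar>"] R e by auto
  define h where "h = (\<lambda>x. \<psi> (f x - m))"
  have "((\<lambda>t. \<psi> (t - m)) has_real_derivative \<psi>' (t - m)) (at t)" for t
    using DERIV_chain2[OF \<psi>(2) DERIV_diff[OF DERIV_ident DERIV_const]] by simp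
  from dominated_poincare_compose[OF poincare r f(1) real_polynomial_function_shift[OF \<psi>(1)] this
      \<psi>(3)[OF centered_le] \<psi>(4)[OF centered_le]]
  have "var \<mu> h \<le> C + r * (2 * (R + e))\<^sup>2"
    by (simp add: h_def)
  moreover have "var \<mu> f \<le> var \<mu> h
      + 2 * (expectation (\<lambda>x. \<bar>f x - m\<bar> powr p) * R powr (2 - p) + e)"
    using second_moment_le_clipped_variance[of "\<lambda>x. f x - m", OF _ centered_le centered
        continuous_on_polymonial_function \<psi>(4,5) R p] f_meas \<psi>(1)
    by (simp add: var_def h_def m_def real_polynomial_function_eq)
  ultimately show ?thesis
    by (simp add: m_def)
qed

lemma var_le_tail:
  fixes \<mu> :: "'a::euclidean_space measure" and f :: "'a \<Rightarrow> real"
  assumes \<mu>: "prob_space \<mu>" "sets \<mu> = sets borel" and f: "smooth_fun f" "bounded (range f)"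
    and poincare: "dominated_poincare \<mu> f C r"
    and r: "0 \<le> r" and p: "2 \<le> p" and R: "0 < R"
  shows "var \<mu> f \<le> C + r * (2 * R)\<^sup>2
    + 2 * ((\<integral>x. \<bar>f x - (\<integral>y. f y \<partial>\<mu>)\<bar> powr p \<partial>\<mu>) * R powr (2 - p))"
proof -
  define I where "I = (\<integral>x. \<bar>f x - (\<integral>y. f y \<partial>\<mu>)\<bar> powr p \<partial>\<mu>)"
  have "((\<lambda>e. C + r * (2 * (R + e))\<^sup>2 + 2 * (I * R powr (2 - p) + e))
      \<longlongrightarrow> C + r * (2 * (R + 0))\<^sup>2 + 2 * (I * R powr (2 - p) + 0)) (at_right 0)"
    by (intro tendsto_intros)
  moreover have "\<forall>\<^sub>F e in at_right 0. var \<mu> f \<le> C + r * (2 * (R + e))\<^sup>2 + 2 * (I * R powr (2 - p) + e)"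
    using eventually_at_right_less[of "0::real"]
    by eventually_elim (rule var_le_clipped[OF \<mu> f poincare r p R, folded I_def])
  ultimately show ?thesis
    unfolding I_def by (intro tendsto_lowerbound) auto
qed

lemma powr_balance:
  fixes p s N :: real
  assumes p: "2 < p" and s: "0 < s" and N: "0 < N"
  defines "r \<equiv> s powr (p / (p - 2)) / 2 powr ((3 * p - 2) / (p - 2))"
    and "R \<equiv> (4 / s) powr (1 / (p - 2)) * N"
  shows "r * (2 * R)\<^sup>2 + 2 * (N powr p * R powr (2 - p)) = s * N\<^sup>2"
proof -
  define k where "k = 1 / (p - 2)"
  have k: "k * (p - 2) = 1"
    using p by (simp add: k_def)
  have "p / (p - 2) = 1 + 2 * k" "(3 * p - 2) / (p - 2) = 3 + 4 * k"
    using p by (auto simp: k_def field_simps)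
  then have r: "r = s * s powr (2 * k) / (8 * 4 powr (2 * k))"
    using s by (simp add: r_def powr_add powr_powr[symmetric] powr_realpow)
  have R: "R = (4 / s) powr k * N"
    by (simp add: R_def k_def)
  have "R\<^sup>2 = (4 / s) powr (2 * k) * N\<^sup>2"
    using s by (simp add: R power_mult_distrib powr_power)
  then have first: "r * (2 * R)\<^sup>2 = s * N\<^sup>2 / 2"
    using s N by (simp add: r powr_divide power_mult_distrib)
  have "k * (2 - p) = -1"
    using k by (simp add: algebra_simps)
  then have "R powr (2 - p) = s / 4 * N powr (2 - p)"
    using s N by (simp add: R powr_mult powr_powr powr_minus_divide)
  moreover have "N powr p * N powr (2 - p) = N\<^sup>2"
    using N by (simp add: powr_add[symmetric])
  ultimately have second: "N powr p * R powr (2 - p) = s * N\<^sup>2 / 4"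
    by (metis mult.left_commute times_divide_eq_left mult.commute)
  show ?thesis
    using first second by simp
qed

lemma var_le_Lp_norm:
  fixes \<mu> :: "'a::euclidean_space measure" and f :: "'a \<Rightarrow> real"
  assumes \<mu>: "prob_space \<mu>" "sets \<mu> = sets borel" and f: "smooth_fun f" "bounded (range f)"
    and p: "2 < p" and s: "0 < s"
  defines "r \<equiv> s powr (p / (p - 2)) / 2 powr ((3 * p - 2) / (p - 2))"
  assumes poincare: "dominated_poincare \<mu> f C r"
  shows "var \<mu> f \<le> C + s * (Lp_norm \<mu> p (\<lambda>x. f x - (\<integral>y. f y \<partial>\<mu>)))\<^sup>2"
proof -
  define I where "I = (\<integral>x. \<bar>f x - (\<integral>y. f y \<partial>\<mu>)\<bar> powr p \<partial>\<mu>)"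
  have r: "0 \<le> r"
    by (simp add: r_def)
  note tail = var_le_tail[OF \<mu> f poincare r, of p, folded I_def]
  have "I \<ge> 0"
    unfolding I_def by simp
  then consider "I = 0" | "I > 0"
    by linarith
  then show ?thesis
  proof cases
    case 1
    have "((\<lambda>R. C + r * (2 * R)\<^sup>2) \<longlongrightarrow> C + r * (2 * 0)\<^sup>2) (at_right 0)"
      by (intro tendsto_intros)
    moreover have "\<forall>\<^sub>F R in at_right 0. var \<mu> f \<le> C + r * (2 * R)\<^sup>2"
      using eventually_at_right_less[of "0::real"]
    proof (rule eventually_mono)
      show "var \<mu> f \<le> C + r * (2 * R)\<^sup>2" if "0 < R" for R
        using tail[OF _ that] 1 p by simp
    qed
    ultimately have "var \<mu> f \<le> C"
      by (intro tendsto_lowerbound) auto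
    then show ?thesis
      using 1 p by (simp add: Lp_norm_def I_def)
  next
    case 2
    define N where "N = Lp_norm \<mu> p (\<lambda>x. f x - (\<integral>y. f y \<partial>\<mu>))"
    have N: "0 < N" "I = N powr p"
      using 2 p by (auto simp: N_def Lp_norm_def I_def powr_powr)
    text \<open>The radius that balances the oscillation term against the tail term.\<close>
    define R where "R = (4 / s) powr (1 / (p - 2)) * N"
    have "0 < R"
      using s N by (simp add: R_def)
    then have "var \<mu> f \<le> C + r * (2 * R)\<^sup>2 + 2 * (N powr p * R powr (2 - p))"
      using tail p N by simp
    then show ?thesis
      using powr_balance[OF p s N(1)] by (simp add: r_def R_def N_def)
  qed
qed

theorem lemma2p6:
  fixes \<mu> :: "'a::euclidean_space measure" and \<beta> :: "real \<Rightarrow> ennreal"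
    and p s :: real and f :: "'a \<Rightarrow> real"
  assumes "prob_space \<mu>" and "sets \<mu> = sets borel"
    and "weak_poincare \<mu> \<beta>"
    and "p > 2" and "s > 0"
    and "smooth_fun f" and "bounded (range f)"
  shows "ennreal (var \<mu> f)
     \<le> \<beta> (s powr (p / (p - 2)) / 2 powr ((3 * p - 2) / (p - 2))) * (\<integral>\<^sup>+x. ennreal (grad_sq f x) \<partial>\<mu>)
       + ennreal (s * (Lp_norm \<mu> p (\<lambda>x. f x - (\<integral>y. f y \<partial>\<mu>)))\<^sup>2)"
proof -
  define r where "r = s powr (p / (p - 2)) / 2 powr ((3 * p - 2) / (p - 2))"
  define E where "E = (\<integral>\<^sup>+x. ennreal (grad_sq f x) \<partial>\<mu>)"
  show ?thesis
  proof (cases "\<beta> r * E = \<top>")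
    case True
    then show ?thesis
      by (simp add: r_def E_def)
  next
    case False
    then obtain C where C: "\<beta> r * E = ennreal C" "0 \<le> C"
      by (cases "\<beta> r * E") auto
    have "0 < r"
      using assms(5) by (simp add: r_def)
    then have "dominated_poincare \<mu> f C r"
      using C unfolding E_def by (rule weak_poincare_dominated[OF assms(3)])
    then have "var \<mu> f \<le> C + s * (Lp_norm \<mu> p (\<lambda>x. f x - (\<integral>y. f y \<partial>\<mu>)))\<^sup>2"
      unfolding r_def by (rule var_le_Lp_norm[OF assms(1,2,6,7,4,5)])
    then have "ennreal (var \<mu> f) \<le> ennreal (C + s * (Lp_norm \<mu> p (\<lambda>x. f x - (\<integral>y. f y \<partial>\<mu>)))\<^sup>2)"
      by (rule ennreal_leI)
    also have "\<dots> = ennreal C + ennreal (s * (Lp_norm \<mu> p (\<lambda>x. f x - (\<integral>y. f y \<partial>\<mu>)))\<^sup>2)"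
      using C(2) assms(5) by (intro ennreal_plus) auto
    finally show ?thesis
      using C(1) by (simp add: r_def E_def)
  qed
qed

end
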